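(* Let $\mathfrak k$ be an $\mathcal A$-invariant subalgebra of $\mathfrak g$ with $\mathfrak h\subseteq\mathfrak k\subsetneq\mathfrak g$ and $D[\mathfrak k]\neq\{\bar\chi^{\mathfrak k}\}$. Put $k=\dim(\mathfrak g/\mathfrak k)$, $R=\frac{1}{k\sqrt{5-1/k}}$ and $\Omega=\{A\in D[\mathfrak k]:|A-\bar\chi^{\mathfrak k}|=R\}$. Then $\Omega\subset\mathfrak F_+$, and for every $A\in\Omega$ there is a number $t_A\ge1$ such that, for $t\ge0$, the operator $A_t=t(A-\bar\chi^{\mathfrak k})+\bar\chi^{\mathfrak k}$ belongs to $\mathfrak F_+$ if $0\le t\le t_A$ and does not belong to $\mathfrak F_+$ if $t_A<t<\infty$. Consequently $X[\mathfrak k]=D[\mathfrak k]\cap\mathfrak F_+$ is star-shaped with respect to $\bar\chi^{\mathfrak k}$ and contains the Euclidean ball bounded by the sphere $\Omega$, i.e. $\{A\in D[\mathfrak k]:|A-\bar\chi^{\mathfrak k}|\le R\}$.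
   Context: $\mathfrak g$ is the Lie algebra of a compact Lie group with a Euclidean inner product $Q$ satisfying $Q([X,Y],Z)=Q(X,[Y,Z])$. Linear operators are symmetric if $Q(AX,Y)=Q(X,AY)$; the norm is $|A|=\sqrt{\mathrm{tr}(A^2)}$ for symmetric $A$. For symmetric $A$ and $a\in\mathbb R$, $F_a$ is the span of eigenvectors with eigenvalue $\le a$; $A$ is filtering if $[F_a,F_b]\subseteq F_{a+b}$ for all $a,b$. $\mathfrak F_+$ is the set of filtering symmetric operators with nonnegative spectrum and trace $1$. $\mathfrak h\subsetneq\mathfrak g$ is a fixed subalgebra and $\mathcal A$ a compact group of automorphisms of $\mathfrak g$ preserving $\mathfrak h$ and $Q$. For a subspace $\mathfrak k$, $1_{\mathfrak k}$ is the $Q$-orthogonal projection onto $\mathfrak k$ and (for $\mathfrak k\neq\mathfrak g$) $\bar\chi^{\mathfrak k}=\frac{1}{\dim(\mathfrak g/\mathfrak k)}(1_{\mathfrak g}-1_{\mathfrak k})$. For an $\mathcal A$-invariant subalgebra $\mathfrak k\supseteq\mathfrak h$, $D[\mathfrak k]$ is the set of symmetric operators $A$ with nonnegative spectrum and trace $1$ that commute with every element of $\mathcal A$, satisfy $A\mathfrak k=0$ and commute with $\mathrm{ad}(X)$ for all $X\in\mathfrak k$. *)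

theory Defs
  imports "HOL-Analysis.Analysis"
begin

text \<open>The Lie algebra g is modelled as a finite-dimensional real inner product space
  'a :: euclidean_space whose inner product plays the role of Q, with a bracket br
  that is bilinear, antisymmetric, satisfies Jacobi, and is Q-invariant.  A real Lie
  algebra with an ad-invariant positive definite inner product is exactly the Lie algebra
  of a compact Lie group.\<close>

definition compact_lie_alg :: "('a::euclidean_space \<Rightarrow> 'a \<Rightarrow> 'a) \<Rightarrow> bool" where
  "compact_lie_alg br \<longleftrightarrow> bilinear br
     \<and> (\<forall>x y. br x y = - br y x)
     \<and> (\<forall>x y z. br x (br y z) + br y (br z x) + br z (br x y) = 0)
     \<and> (\<forall>x y z. inner (br x y) z = inner x (br y z))"

definition subalgebra :: "('a::euclidean_space \<Rightarrow> 'a \<Rightarrow> 'a) \<Rightarrow> 'a set \<Rightarrow> bool" where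
  "subalgebra br K \<longleftrightarrow> subspace K \<and> (\<forall>x\<in>K. \<forall>y\<in>K. br x y \<in> K)"

definition compact_aut_group ::
  "('a::euclidean_space \<Rightarrow> 'a \<Rightarrow> 'a) \<Rightarrow> 'a set \<Rightarrow> ('a \<Rightarrow> 'a) set \<Rightarrow> bool" where
  "compact_aut_group br H Aut \<longleftrightarrow>
     id \<in> Aut \<and> (\<forall>f\<in>Aut. \<forall>g\<in>Aut. f \<circ> g \<in> Aut) \<and> (\<forall>f\<in>Aut. inv f \<in> Aut)
     \<and> compact Aut
     \<and> (\<forall>f\<in>Aut. linear f \<and> bij f
            \<and> (\<forall>x y. f (br x y) = br (f x) (f y))
            \<and> (\<forall>x y. inner (f x) (f y) = inner x y)
            \<and> f ` H = H)"

definition symmetric_op :: "('a::euclidean_space \<Rightarrow> 'a) \<Rightarrow> bool" where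
  "symmetric_op A \<longleftrightarrow> linear A \<and> (\<forall>x y. inner (A x) y = inner x (A y))"

definition trace_op :: "('a::euclidean_space \<Rightarrow> 'a) \<Rightarrow> real" where
  "trace_op A = (\<Sum>b\<in>Basis. inner (A b) b)"

definition op_norm_tr :: "('a::euclidean_space \<Rightarrow> 'a) \<Rightarrow> real" where
  "op_norm_tr A = sqrt (trace_op (A \<circ> A))"

definition nonneg_spectrum :: "('a::euclidean_space \<Rightarrow> 'a) \<Rightarrow> bool" where
  "nonneg_spectrum A \<longleftrightarrow> (\<forall>c v. v \<noteq> 0 \<and> A v = c *\<^sub>R v \<longrightarrow> c \<ge> 0)"

definition Fsub :: "('a::euclidean_space \<Rightarrow> 'a) \<Rightarrow> real \<Rightarrow> 'a set" where
  "Fsub A a = span {v. v \<noteq> 0 \<and> (\<exists>c\<le>a. A v = c *\<^sub>R v)}"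

definition filtering :: "('a::euclidean_space \<Rightarrow> 'a \<Rightarrow> 'a) \<Rightarrow> ('a \<Rightarrow> 'a) \<Rightarrow> bool" where
  "filtering br A \<longleftrightarrow> (\<forall>a b. \<forall>x\<in>Fsub A a. \<forall>y\<in>Fsub A b. br x y \<in> Fsub A (a + b))"

definition Fplus :: "('a::euclidean_space \<Rightarrow> 'a \<Rightarrow> 'a) \<Rightarrow> ('a \<Rightarrow> 'a) set" where
  "Fplus br = {A. symmetric_op A \<and> filtering br A \<and> nonneg_spectrum A \<and> trace_op A = 1}"

definition orth_proj :: "'a::euclidean_space set \<Rightarrow> 'a \<Rightarrow> 'a" where
  "orth_proj K x = (THE y. y \<in> K \<and> (\<forall>z\<in>K. inner (x - y) z = 0))"

definition codim :: "'a::euclidean_space set \<Rightarrow> nat" where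
  "codim K = DIM('a) - dim K"

definition chibar :: "'a::euclidean_space set \<Rightarrow> 'a \<Rightarrow> 'a" where
  "chibar K x = (1 / real (codim K)) *\<^sub>R (x - orth_proj K x)"

definition Dset :: "('a::euclidean_space \<Rightarrow> 'a \<Rightarrow> 'a) \<Rightarrow> ('a \<Rightarrow> 'a) set \<Rightarrow> 'a set
    \<Rightarrow> ('a \<Rightarrow> 'a) set" where
  "Dset br Aut K = {A. symmetric_op A \<and> nonneg_spectrum A \<and> trace_op A = 1
      \<and> (\<forall>f\<in>Aut. A \<circ> f = f \<circ> A)
      \<and> (\<forall>x\<in>K. A x = 0)
      \<and> (\<forall>X\<in>K. \<forall>y. A (br X y) = br X (A y))}"

definition star_shaped_wrt :: "('a::euclidean_space \<Rightarrow> 'a) set \<Rightarrow> ('a \<Rightarrow> 'a) \<Rightarrow> bool" where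
  "star_shaped_wrt S C \<longleftrightarrow> C \<in> S \<and>
     (\<forall>A\<in>S. \<forall>s\<in>{0..1}. (\<lambda>x. s *\<^sub>R (A x - C x) + C x) \<in> S)"

end

theory Submission
  imports Defs
begin

text \<open>Every \<open>A \<in> D[\<kk>]\<close> kills \<open>\<kk>\<close> and commutes with \<open>ad \<kk>\<close> and with \<open>\<chi>\<close>, so \<open>A\<^sub>t\<close> is
  diagonalised by eigenvectors of \<open>A\<close> lying in \<open>\<kk>\<close> or in \<open>\<kk>\<^sup>\<perp>\<close>, with eigenvalues \<open>0\<close>
  resp. \<open>1/k + t (\<lambda> - 1/k)\<close>. Nonnegativity of the spectrum and the filtering condition
  for \<open>A\<^sub>t\<close> thus become affine conditions in \<open>t\<close> which all hold at \<open>t = 0\<close>, where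
  \<open>A\<^sub>0 = \<chi>\<close>; hence \<open>{t \<ge> 0. A\<^sub>t \<in> F\<^sub>+}\<close> is a closed interval \<open>[0, t\<^sub>A]\<close>. It is bounded
  because \<open>A - \<chi>\<close> is a nonzero traceless symmetric operator, so it has a negative
  eigenvalue on \<open>\<kk>\<^sup>\<perp>\<close>. Finally, pairing \<open>A - \<chi>\<close> with \<open>v \<otimes> v - 2 w \<otimes> w + \<chi>\<close> for unit
  eigenvectors \<open>v \<bottom> w\<close> in \<open>\<kk>\<^sup>\<perp>\<close> shows that \<open>|A - \<chi>| \<le> R\<close> forces \<open>\<nu> \<le> 2 \<mu>\<close> for any
  two distinct eigenvalues \<open>\<nu>, \<mu>\<close> of \<open>A\<close> on \<open>\<kk>\<^sup>\<perp>\<close>, which rules out the only possible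
  violation of the filtering condition.\<close>

section \<open>Orthogonal projections\<close>

lemma orth_proj_ex1:
  fixes K :: "'a::euclidean_space set"
  assumes "subspace K"
  shows "\<exists>!y. y \<in> K \<and> (\<forall>z\<in>K. inner (x - y) z = 0)"
proof (rule ex_ex1I)
  obtain y z where "y \<in> span K" "\<And>w. w \<in> span K \<Longrightarrow> orthogonal z w" "x = y + z"
    using orthogonal_subspace_decomp_exists by blast
  moreover have "span K = K" using assms by (simp add: span_eq_iff)
  ultimately show "\<exists>y. y \<in> K \<and> (\<forall>z\<in>K. inner (x - y) z = 0)"
    by (intro exI[of _ y]) (simp add: orthogonal_def)
next
  fix y1 y2 assume y1: "y1 \<in> K \<and> (\<forall>z\<in>K. inner (x - y1) z = 0)"
    and y2: "y2 \<in> K \<and> (\<forall>z\<in>K. inner (x - y2) z = 0)"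
  then have "y2 - y1 \<in> K" using assms by (simp add: subspace_diff)
  then have "inner ((x - y1) - (x - y2)) (y2 - y1) = 0"
    using y1 y2 by (simp add: inner_diff_left)
  then show "y1 = y2" by simp
qed

lemma
  fixes K :: "'a::euclidean_space set"
  assumes "subspace K"
  shows orth_proj_in: "orth_proj K x \<in> K"
    and orth_proj_orthogonal: "z \<in> K \<Longrightarrow> inner (x - orth_proj K x) z = 0"
  using theI'[OF orth_proj_ex1[OF assms, of x]] unfolding orth_proj_def by auto

lemma orth_proj_unique:
  fixes K :: "'a::euclidean_space set"
  assumes "subspace K" "y \<in> K" "\<forall>z\<in>K. inner (x - y) z = 0"
  shows "orth_proj K x = y"
  unfolding orth_proj_def using the1_equality[OF orth_proj_ex1[OF assms(1)]] assms(2,3) by blast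

lemma orth_proj_id: "subspace K \<Longrightarrow> x \<in> K \<Longrightarrow> orth_proj K x = x"
  by (rule orth_proj_unique) auto

lemma orth_proj_eq_0_iff:
  assumes "subspace K"
  shows "orth_proj K x = 0 \<longleftrightarrow> (\<forall>z\<in>K. inner x z = 0)"
  using orth_proj_orthogonal[OF assms, where x=x] orth_proj_unique[OF assms, of 0 x]
  by (auto simp: assms subspace_0)

lemma linear_orth_proj:
  assumes K: "subspace K"
  shows "linear (orth_proj K)"
proof (rule linearI)
  fix x y c
  have add: "x + y - (orth_proj K x + orth_proj K y) = (x - orth_proj K x) + (y - orth_proj K y)"
    by (simp add: algebra_simps)
  show "orth_proj K (x + y) = orth_proj K x + orth_proj K y"
    using K orth_proj_in[OF K] orth_proj_orthogonal[OF K]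
    by (intro orth_proj_unique) (auto simp: subspace_add add inner_add_left)
  have scale: "c *\<^sub>R x - c *\<^sub>R orth_proj K x = c *\<^sub>R (x - orth_proj K x)"
    by (simp add: algebra_simps)
  show "orth_proj K (c *\<^sub>R x) = c *\<^sub>R orth_proj K x"
    using K orth_proj_in[OF K] orth_proj_orthogonal[OF K]
    by (intro orth_proj_unique) (auto simp: subspace_scale scale)
qed

lemma orth_proj_symmetric:
  assumes K: "subspace K"
  shows "inner (orth_proj K x) y = inner x (orth_proj K y)"
proof -
  have "inner (x - orth_proj K x) (orth_proj K y) = 0" "inner (y - orth_proj K y) (orth_proj K x) = 0"
    using orth_proj_in[OF K] orth_proj_orthogonal[OF K] by auto
  then have "inner (orth_proj K y) x = inner (orth_proj K y) (orth_proj K x)"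
    "inner (orth_proj K x) y = inner (orth_proj K x) (orth_proj K y)"
    by (auto simp: inner_diff_right inner_commute)
  then show ?thesis by (simp add: inner_commute)
qed

lemma orth_proj_diff_self: "subspace K \<Longrightarrow> orth_proj K (x - orth_proj K x) = 0"
  by (simp add: linear_diff[OF linear_orth_proj] orth_proj_id orth_proj_in)

lemma orth_proj_orthonormal_sum:
  fixes K :: "'a::euclidean_space set"
  assumes K: "subspace K" and U: "pairwise orthogonal U" "\<And>u. u \<in> U \<Longrightarrow> norm u = 1"
    "finite U" "span U = K"
  shows "orth_proj K x = (\<Sum>u\<in>U. inner x u *\<^sub>R u)"
proof (rule orth_proj_unique[OF K])
  show "(\<Sum>u\<in>U. inner x u *\<^sub>R u) \<in> K"
    unfolding U(4)[symmetric] by (intro span_sum span_scale span_base)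
  have "inner (x - (\<Sum>u\<in>U. inner x u *\<^sub>R u)) z = 0" if "z \<in> span U" for z
    using that
  proof (induction rule: span_induct)
    case base show ?case by (auto simp: subspace_def inner_add_right)
  next
    case (step w)
    have "(\<Sum>u\<in>U. inner x u * inner u w) = (\<Sum>u\<in>{w}. inner x u * inner u w)"
      by (rule sum.mono_neutral_right) (use step U(1,3) in \<open>auto simp: pairwise_def orthogonal_def\<close>)
    then show ?case using step U(2) by (simp add: inner_diff_left inner_sum_left norm_eq_1)
  qed
  then show "\<forall>z\<in>K. inner (x - (\<Sum>u\<in>U. inner x u *\<^sub>R u)) z = 0" using U(4) by auto
qed

lemma trace_orth_proj:
  fixes K :: "'a::euclidean_space set"
  assumes K: "subspace K"
  shows "trace_op (orth_proj K) = real (dim K)"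
proof -
  obtain U where U: "pairwise orthogonal U" "\<And>u. u \<in> U \<Longrightarrow> norm u = 1"
    "independent U" "card U = dim K" "span U = K"
    using orthonormal_basis_subspace[OF K] by blast
  have "trace_op (orth_proj K) = (\<Sum>b\<in>Basis. \<Sum>u\<in>U. inner b u * inner u b)"
    using orth_proj_orthonormal_sum[OF K U(1,2) _ U(5)] U(3)
    by (simp add: trace_op_def inner_sum_left independent_imp_finite)
  also have "\<dots> = (\<Sum>u\<in>U. inner u u)"
    by (subst sum.swap) (simp add: euclidean_inner[symmetric] inner_commute)
  also have "\<dots> = card U" using U(2) by (simp add: norm_eq_1)
  finally show ?thesis using U(4) by simp
qed

section \<open>Symmetric operators and filtrations\<close>

lemma symmetric_opD:
  assumes "symmetric_op T"
  shows "linear T" "inner (T x) y = inner x (T y)"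
  using assms by (auto simp: symmetric_op_def)

definition eigenpair :: "('a::real_vector \<Rightarrow> 'a) \<Rightarrow> 'a \<Rightarrow> real \<Rightarrow> bool" where
  "eigenpair T x c \<longleftrightarrow> x \<noteq> 0 \<and> T x = c *\<^sub>R x"

lemma nonneg_spectrum_iff: "nonneg_spectrum A \<longleftrightarrow> (\<forall>x c. eigenpair A x c \<longrightarrow> 0 \<le> c)"
  by (auto simp: nonneg_spectrum_def eigenpair_def)

lemma nonneg_quadratic_imp_linear_coeff_0:
  fixes a q :: real
  assumes "\<And>t. 0 \<le> 2 * t * a + t\<^sup>2 * q"
  shows "a = 0"
proof (rule ccontr)
  assume "a \<noteq> 0"
  have "0 \<le> q" using assms[of 1] assms[of "-1"] by simp
  define t where "t = - a / (q + 1)"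
  have "t * (q + 1) = - a" using \<open>0 \<le> q\<close> by (simp add: t_def)
  then have "t\<^sup>2 * (q + 1) = - (t * a)" by (simp add: power2_eq_square algebra_simps)
  moreover have "t * a = - (a\<^sup>2 / (q + 1))" by (simp add: t_def power2_eq_square)
  moreover have "t\<^sup>2 * q \<le> t\<^sup>2 * (q + 1)" by (simp add: mult_left_mono)
  moreover have "0 < a\<^sup>2 / (q + 1)" using \<open>a \<noteq> 0\<close> \<open>0 \<le> q\<close> by simp
  ultimately show False using assms[of t] by linarith
qed

lemma psd_isotropic_orthogonal:
  fixes T :: "'a::euclidean_space \<Rightarrow> 'a"
  assumes T: "symmetric_op T" and U: "subspace U" and psd: "\<And>y. y \<in> U \<Longrightarrow> 0 \<le> inner y (T y)"
    and x: "x \<in> U" "inner x (T x) = 0" and y: "y \<in> U"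
  shows "inner y (T x) = 0"
proof (rule nonneg_quadratic_imp_linear_coeff_0)
  fix t :: real
  have "x + t *\<^sub>R y \<in> U" using U x y by (simp add: subspace_add subspace_scale)
  then have "0 \<le> inner (x + t *\<^sub>R y) (T (x + t *\<^sub>R y))" by (rule psd)
  also have "\<dots> = inner x (T x) + t * inner x (T y) + t * inner y (T x) + t\<^sup>2 * inner y (T y)"
    using symmetric_opD(1)[OF T]
    by (simp add: linear_add linear_scale inner_add_left inner_add_right power2_eq_square algebra_simps)
  also have "inner x (T y) = inner y (T x)"
    using symmetric_opD(2)[OF T] by (metis inner_commute)
  finally show "0 \<le> 2 * t * inner y (T x) + t\<^sup>2 * inner y (T y)"
    using x by (simp add: algebra_simps)
qed

lemma symmetric_op_max_eigenpair:
  fixes T :: "'a::euclidean_space \<Rightarrow> 'a"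
  assumes T: "symmetric_op T" and U: "subspace U" and inv: "\<And>x. x \<in> U \<Longrightarrow> T x \<in> U"
    and "U \<noteq> {0}"
  obtains u m where "u \<in> U" "eigenpair T u m" "\<And>x. x \<in> U \<Longrightarrow> inner x (T x) \<le> m * inner x x"
proof -
  note lin = symmetric_opD(1)[OF T]
  define S where "S = U \<inter> sphere 0 1"
  obtain u0 where u0: "u0 \<in> U" "u0 \<noteq> 0" using \<open>U \<noteq> {0}\<close> U subspace_0 by blast
  have "compact S" unfolding S_def
    by (intro closed_Int_compact closed_subspace U compact_sphere)
  moreover have "u0 /\<^sub>R norm u0 \<in> S" using u0 U by (auto simp: S_def subspace_scale)
  moreover have "continuous_on S (\<lambda>x. inner x (T x))"
    using lin by (intro continuous_intros linear_continuous_on linear_conv_bounded_linear[THEN iffD1])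
  ultimately obtain u where u: "u \<in> S" and umax: "\<And>y. y \<in> S \<Longrightarrow> inner y (T y) \<le> inner u (T u)"
    using continuous_attains_sup[of S] by blast
  define m where "m = inner u (T u)"
  have uU: "u \<in> U" and uu: "inner u u = 1" using u by (auto simp: S_def norm_eq_1)
  have bound: "inner x (T x) \<le> m * inner x x" if x: "x \<in> U" for x
  proof (cases "x = 0")
    case True then show ?thesis by (simp add: linear_0[OF lin])
  next
    case False
    have "x /\<^sub>R norm x \<in> S" using x False U by (auto simp: S_def subspace_scale)
    then have "inner (x /\<^sub>R norm x) (T (x /\<^sub>R norm x)) \<le> m" using umax m_def by blast
    then have "inner x (T x) / (norm x)\<^sup>2 \<le> m"
      by (simp add: linear_scale[OF lin] power2_eq_square divide_simps)
    then have "inner x (T x) \<le> m * (norm x)\<^sup>2" using False by (simp add: divide_simps)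
    then show ?thesis by (simp add: power2_norm_eq_inner)
  qed
  define B where "B = (\<lambda>x. m *\<^sub>R x - T x)"
  have "linear B"
    by (rule linearI) (auto simp: B_def linear_add[OF lin] linear_scale[OF lin] algebra_simps)
  then have B: "symmetric_op B"
    using symmetric_opD(2)[OF T] by (simp add: symmetric_op_def B_def inner_diff_left inner_diff_right)
  have "inner (B u) (B u) = 0"
  proof (rule psd_isotropic_orthogonal[OF B U])
    show "0 \<le> inner y (B y)" if "y \<in> U" for y using bound[OF that] by (simp add: B_def inner_diff_right)
    show "inner u (B u) = 0" by (simp add: B_def inner_diff_right uu m_def)
    show "B u \<in> U" using inv uU U by (simp add: B_def subspace_diff subspace_scale)
  qed (use uU in auto)
  then have "eigenpair T u m" using uu by (auto simp: B_def eigenpair_def)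
  show thesis using uU \<open>eigenpair T u m\<close> bound by (rule that)
qed

lemma symmetric_eigenvectors_orthogonal:
  assumes "symmetric_op T" "T x = a *\<^sub>R x" "T z = c *\<^sub>R z" "a \<noteq> c"
  shows "inner x z = 0"
proof -
  have "inner (T x) z = inner x (T z)" using symmetric_opD[OF assms(1)] by blast
  then show ?thesis using assms by simp
qed

lemma Fsub_orthogonal:
  assumes T: "symmetric_op T" and v: "v \<in> Fsub T a" and z: "T z = c *\<^sub>R z" "a < c"
  shows "inner v z = 0"
  using v unfolding Fsub_def
proof (induction rule: span_induct)
  case base
  show ?case by (auto simp: subspace_def inner_add_left)
next
  case (step e)
  then obtain c' where "c' \<le> a" "T e = c' *\<^sub>R e" by blast
  with z show ?case using symmetric_eigenvectors_orthogonal[OF T] by force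
qed

text \<open>The orthogonal complement of all eigenvectors is \<open>T\<close>-invariant, hence zero.\<close>
lemma orthogonal_all_eigenvectors_eq_0:
  fixes T :: "'a::euclidean_space \<Rightarrow> 'a"
  assumes T: "symmetric_op T" and r: "\<And>e c. eigenpair T e c \<Longrightarrow> inner r e = 0"
  shows "r = 0"
proof -
  define U where "U = {u. \<forall>e c. eigenpair T e c \<longrightarrow> inner u e = 0}"
  have U: "subspace U" unfolding U_def subspace_def by (auto simp: inner_add_left)
  have inv: "T x \<in> U" if "x \<in> U" for x
    unfolding U_def
  proof (intro allI impI CollectI)
    fix e c assume "eigenpair T e c"
    then have "inner (T x) e = c * inner x e"
      using symmetric_opD(2)[OF T] by (simp add: eigenpair_def)
    moreover have "inner x e = 0" using \<open>x \<in> U\<close> \<open>eigenpair T e c\<close> unfolding U_def by blast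
    ultimately show "inner (T x) e = 0" by simp
  qed
  have "U = {0}"
  proof (rule ccontr)
    assume "U \<noteq> {0}"
    then obtain u m where "u \<in> U" "eigenpair T u m"
      using symmetric_op_max_eigenpair[OF T U inv] by metis
    then show False by (auto simp: U_def eigenpair_def)
  qed
  moreover have "r \<in> U" using r unfolding U_def by blast
  ultimately show ?thesis by simp
qed

lemma Fsub_iff_orthogonal:
  fixes T :: "'a::euclidean_space \<Rightarrow> 'a"
  assumes T: "symmetric_op T"
  shows "v \<in> Fsub T a \<longleftrightarrow> (\<forall>z c. eigenpair T z c \<and> a < c \<longrightarrow> inner v z = 0)"
proof
  assume "v \<in> Fsub T a"
  then show "\<forall>z c. eigenpair T z c \<and> a < c \<longrightarrow> inner v z = 0"
    using Fsub_orthogonal[OF T] by (auto simp: eigenpair_def)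
next
  assume H: "\<forall>z c. eigenpair T z c \<and> a < c \<longrightarrow> inner v z = 0"
  obtain w r where w: "w \<in> span (Fsub T a)" and r: "\<And>q. q \<in> span (Fsub T a) \<Longrightarrow> orthogonal r q"
    and vwr: "v = w + r"
    by (rule orthogonal_subspace_decomp_exists[of "Fsub T a" v]) blast
  have span_Fsub: "span (Fsub T a) = Fsub T a" by (simp add: Fsub_def)
  note w = w[unfolded span_Fsub] and r = r[unfolded span_Fsub]
  have "r = 0"
  proof (rule orthogonal_all_eigenvectors_eq_0[OF T])
    fix e c assume e: "eigenpair T e c"
    show "inner r e = 0"
    proof (cases "c \<le> a")
      case True
      then have "e \<in> Fsub T a" using e unfolding Fsub_def eigenpair_def by (intro span_base) auto
      then show ?thesis using r by (simp add: orthogonal_def)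
    next
      case False
      then have "inner v e = 0" "inner w e = 0"
        using H e Fsub_orthogonal[OF T w] by (auto simp: eigenpair_def)
      then show ?thesis using vwr by (simp add: inner_add_left)
    qed
  qed
  then show "v \<in> Fsub T a" using vwr w by simp
qed

lemma filtering_iff_eigenpairs:
  fixes T :: "'a::euclidean_space \<Rightarrow> 'a"
  assumes T: "symmetric_op T" and br: "bilinear br"
  shows "filtering br T \<longleftrightarrow> (\<forall>x y z a b c. eigenpair T x a \<and> eigenpair T y b \<and> eigenpair T z c
           \<and> a + b < c \<longrightarrow> inner (br x y) z = 0)"
proof
  assume f: "filtering br T"
  show "\<forall>x y z a b c. eigenpair T x a \<and> eigenpair T y b \<and> eigenpair T z c \<and> a + b < c
    \<longrightarrow> inner (br x y) z = 0"
  proof (intro allI impI)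
    fix x y z a b c assume H: "eigenpair T x a \<and> eigenpair T y b \<and> eigenpair T z c \<and> a + b < c"
    have "x \<in> Fsub T a" "y \<in> Fsub T b" using H unfolding Fsub_def eigenpair_def by (auto intro!: span_base)
    then have "br x y \<in> Fsub T (a + b)" using f by (auto simp: filtering_def)
    then show "inner (br x y) z = 0" using H Fsub_iff_orthogonal[OF T] by blast
  qed
next
  assume H: "\<forall>x y z a b c. eigenpair T x a \<and> eigenpair T y b \<and> eigenpair T z c \<and> a + b < c
    \<longrightarrow> inner (br x y) z = 0"
  show "filtering br T" unfolding filtering_def
  proof (intro allI ballI)
    fix a b x y assume x: "x \<in> Fsub T a" and y: "y \<in> Fsub T b"
    show "br x y \<in> Fsub T (a + b)" unfolding Fsub_iff_orthogonal[OF T]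
    proof (intro allI impI)
      fix z c assume z: "eigenpair T z c \<and> a + b < c"
      have "inner (br x' y) z = 0" if "x' \<in> Fsub T a" for x'
        using that unfolding Fsub_def
      proof (induction rule: span_induct)
        case base
        show ?case
          by (auto simp: subspace_def bilinear_ladd[OF br] bilinear_lmul[OF br]
              bilinear_lzero[OF br] inner_add_left)
      next
        case (step e)
        then obtain a' where a': "a' \<le> a" "T e = a' *\<^sub>R e" "e \<noteq> 0" by blast
        show ?case using y unfolding Fsub_def
        proof (induction rule: span_induct)
          case base
          show ?case
            by (auto simp: subspace_def bilinear_radd[OF br] bilinear_rmul[OF br]
                bilinear_rzero[OF br] inner_add_left)
        next
          case (step f)
          then obtain b' where "b' \<le> b" "T f = b' *\<^sub>R f" "f \<noteq> 0" by blast
          then show ?case using H a' z by (auto simp: eigenpair_def)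
        qed
      qed
      then show "inner (br x y) z = 0" using x by blast
    qed
  qed
qed

lemma sum_Basis_inner_square: "(\<Sum>b\<in>Basis. inner b u * inner b u) = inner u u"
  by (simp add: euclidean_inner[of u u] inner_commute)

lemma op_norm_tr_eq:
  assumes "symmetric_op T"
  shows "op_norm_tr T = sqrt (\<Sum>b\<in>Basis. (norm (T b))\<^sup>2)"
  using symmetric_opD(2)[OF assms]
  by (simp add: op_norm_tr_def trace_op_def power2_norm_eq_inner)

lemma sum_inner_le_op_norm_tr:
  assumes "symmetric_op S" "symmetric_op T"
  shows "(\<Sum>b\<in>Basis. inner (S b) (T b)) \<le> op_norm_tr S * op_norm_tr T"
proof -
  have "(\<Sum>b\<in>Basis. inner (S b) (T b)) \<le> (\<Sum>b\<in>Basis. norm (S b) * norm (T b))"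
    by (rule sum_mono) (rule norm_cauchy_schwarz)
  also have "\<dots> \<le> sqrt ((\<Sum>b\<in>Basis. (norm (S b))\<^sup>2) * (\<Sum>b\<in>Basis. (norm (T b))\<^sup>2))"
    by (rule real_le_rsqrt) (rule Cauchy_Schwarz_ineq_sum)
  finally show ?thesis by (simp add: op_norm_tr_eq assms real_sqrt_mult)
qed

lemma symmetric_trace_0_negative_eigenpair:
  fixes T :: "'a::euclidean_space \<Rightarrow> 'a"
  assumes T: "symmetric_op T" and tr: "trace_op T = 0" and nz: "T \<noteq> (\<lambda>x. 0)"
  obtains u M where "0 < M" "eigenpair T u (- M)"
proof -
  have nT: "symmetric_op (\<lambda>x. - T x)"
    using symmetric_opD[OF T] by (simp add: symmetric_op_def linear_compose_neg)
  obtain u M where "eigenpair (\<lambda>x. - T x) u M" and Mmax: "\<And>x. inner x (- T x) \<le> M * inner x x"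
    using symmetric_op_max_eigenpair[OF nT subspace_UNIV] by (metis UNIV_I UNIV_not_singleton)
  then have u: "eigenpair T u (- M)"
    by (auto simp: eigenpair_def) (metis minus_minus scaleR_minus_left)
  have "0 < M"
  proof (rule ccontr)
    assume "\<not> 0 < M"
    then have psd: "0 \<le> inner x (T x)" for x
      using Mmax[of x] mult_nonpos_nonneg[of M "inner x x"] by simp
    have "inner b (T b) = 0" if "b \<in> Basis" for b
    proof -
      have "(\<Sum>b\<in>Basis. inner b (T b)) = 0" using tr by (simp add: trace_op_def inner_commute)
      then show ?thesis using sum_nonneg_eq_0_iff[of Basis "\<lambda>b. inner b (T b)"] psd that by simp
    qed
    then have "inner (T b) (T b) = 0" if "b \<in> Basis" for b
      using psd_isotropic_orthogonal[OF T subspace_UNIV, of b "T b"] psd that by simp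
    then have "T = (\<lambda>x. 0)"
      using linear_eq_stdbasis[OF symmetric_opD(1)[OF T] linear_zero] by simp
    with nz show False ..
  qed
  then show thesis using u by (rule that)
qed

section \<open>The ray from \<open>\<chi>\<close> through an operator\<close>

lemma affine_pos_near_left:
  fixes h0 h1 t :: real
  assumes "0 < h0 + t * h1" "0 < t"
  obtains s where "0 < s" "s < t" "0 < h0 + s * h1"
proof -
  have "((\<lambda>s. h0 + s * h1) \<longlongrightarrow> h0 + t * h1) (at_left t)"
    by (intro tendsto_intros)
  then have "\<forall>\<^sub>F s in at_left t. 0 < h0 + s * h1"
    using assms(1) by (rule order_tendstoD)
  moreover have "\<forall>\<^sub>F s in at_left t. s \<in> {0<..<t}"
    using assms(2) by (rule eventually_at_left_real)
  ultimately have "\<forall>\<^sub>F s in at_left t. 0 < h0 + s * h1 \<and> s \<in> {0<..<t}"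
    by (rule eventually_conj)
  then obtain s where "0 < h0 + s * h1" "s \<in> {0<..<t}"
    using eventually_happens'[OF trivial_limit_at_left_real] by blast
  then show thesis using that by auto
qed

lemma affine_pos_mono:
  fixes h0 h1 s t :: real
  assumes "h0 \<le> 0" "0 < h0 + s * h1" "0 < s" "s \<le> t"
  shows "0 < h0 + t * h1"
proof -
  have "0 < h1" using assms(1-3) zero_less_mult_iff[of s h1] by linarith
  then have "s * h1 \<le> t * h1" using assms(4) by (simp add: mult_right_mono)
  then show ?thesis using assms(2) by linarith
qed

lemma affine_nonneg_between:
  fixes h0 h1 s t :: real
  assumes "0 \<le> h0" "0 \<le> h0 + t * h1" "0 \<le> s" "s \<le> t"
  shows "0 \<le> h0 + s * h1"
proof (cases "0 \<le> h1")
  case False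
  then have "t * h1 \<le> s * h1" using assms(4) by (simp add: mult_right_mono_neg)
  then show ?thesis using assms(2) by linarith
qed (use assms in simp)

locale proper_subalgebra =
  fixes br :: "'a::euclidean_space \<Rightarrow> 'a \<Rightarrow> 'a" and K :: "'a set"
  assumes compact_lie_alg: "compact_lie_alg br" and subalgebra: "subalgebra br K"
    and proper: "K \<noteq> UNIV"
begin

abbreviation "P \<equiv> orth_proj K"
abbreviation "k \<equiv> real (codim K)"
abbreviation "chi \<equiv> chibar K"

lemma subspace_K: "subspace K"
  using subalgebra by (simp add: subalgebra_def)

lemma bracket_closed: "x \<in> K \<Longrightarrow> y \<in> K \<Longrightarrow> br x y \<in> K"
  using subalgebra by (simp add: subalgebra_def)

lemma bilinear_br: "bilinear br"
  using compact_lie_alg unfolding compact_lie_alg_def by blast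

lemma linear_br: "linear (br x)"
  using bilinear_br by (simp add: bilinear_def)

lemma br_antisym: "br x y = - br y x"
  using compact_lie_alg unfolding compact_lie_alg_def by blast

lemma br_inner_invariant: "inner (br x y) z = inner x (br y z)"
  using compact_lie_alg unfolding compact_lie_alg_def by blast

lemmas P_in = orth_proj_in[OF subspace_K]
  and P_orthogonal = orth_proj_orthogonal[OF subspace_K]
  and P_unique = orth_proj_unique[OF subspace_K]
  and P_id = orth_proj_id[OF subspace_K]
  and P_eq_0_iff = orth_proj_eq_0_iff[OF subspace_K]
  and P_symmetric = orth_proj_symmetric[OF subspace_K]
  and P_diff_self = orth_proj_diff_self[OF subspace_K]
  and linear_P = linear_orth_proj[OF subspace_K]

lemma P_scale: "P (c *\<^sub>R x) = c *\<^sub>R P x"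
  by (rule linear_scale[OF linear_P])

lemma orthogonal_K: "P z = 0 \<Longrightarrow> w \<in> K \<Longrightarrow> inner w z = 0"
  using P_eq_0_iff by (simp add: inner_commute)

lemma codim_pos: "0 < k"
proof -
  have "dim K \<noteq> DIM('a)"
  proof
    assume "dim K = DIM('a)"
    then have "span K = UNIV" by (simp add: dim_eq_full)
    with proper subspace_K show False by (metis span_eq_iff)
  qed
  then show ?thesis using dim_subset_UNIV[of K] by (simp add: codim_def)
qed

lemma chi_eq: "chi x = (1 / k) *\<^sub>R (x - P x)"
  by (simp add: chibar_def)

lemma chi_K: "x \<in> K \<Longrightarrow> chi x = 0"
  by (simp add: chi_eq P_id)

lemma chi_orthogonal_K: "P x = 0 \<Longrightarrow> chi x = (1 / k) *\<^sub>R x"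
  by (simp add: chi_eq)

lemma P_chi: "P (chi x) = 0"
  by (simp add: chi_eq P_scale P_diff_self)

lemma symmetric_chi: "symmetric_op chi"
proof -
  have "linear chi" unfolding chi_eq
    by (rule linearI) (auto simp: linear_add[OF linear_P] P_scale algebra_simps)
  then show ?thesis by (simp add: symmetric_op_def chi_eq inner_diff_left inner_diff_right P_symmetric)
qed

lemma trace_chi: "trace_op chi = 1"
proof -
  have "trace_op chi = (1 / k) * (\<Sum>b\<in>Basis. 1 - inner (P b) b)"
    by (simp add: trace_op_def chi_eq inner_diff_left sum_distrib_left)
  also have "(\<Sum>b\<in>Basis. 1 - inner (P b) b) = k"
    using trace_orth_proj[OF subspace_K] dim_subset_UNIV[of K]
    by (simp add: sum_subtractf trace_op_def codim_def of_nat_diff)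
  finally show ?thesis using codim_pos by simp
qed

lemma chi_eigenpair_cases:
  assumes "eigenpair chi x a"
  shows "(a = 0 \<and> x \<in> K) \<or> (a = 1 / k \<and> P x = 0)"
proof -
  have chi_x: "chi x = a *\<^sub>R x" and "x \<noteq> 0" using assms by (auto simp: eigenpair_def)
  have "a *\<^sub>R P x = 0" using P_chi[of x] by (simp add: chi_x P_scale)
  show ?thesis
  proof (cases "a = 0")
    case True
    then have "x = P x" using chi_x codim_pos by (simp add: chi_eq)
    then show ?thesis using True P_in[of x] by simp
  next
    case False
    then have "P x = 0" using \<open>a *\<^sub>R P x = 0\<close> by simp
    then have "a = 1 / k"
      using chi_x chi_orthogonal_K \<open>x \<noteq> 0\<close> by (metis scaleR_cancel_right)
    then show ?thesis using \<open>P x = 0\<close> by simp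
  qed
qed

lemma chi_in_Fplus: "chi \<in> Fplus br"
proof -
  have k: "0 < 1 / k" using codim_pos by simp
  then have "nonneg_spectrum chi"
    using chi_eigenpair_cases unfolding nonneg_spectrum_iff by force
  moreover have "filtering br chi"
    unfolding filtering_iff_eigenpairs[OF symmetric_chi bilinear_br]
  proof (intro allI impI, elim conjE)
    fix x y z a b c
    assume "eigenpair chi x a" "eigenpair chi y b" "eigenpair chi z c" and abc: "a + b < c"
    note x = chi_eigenpair_cases[OF this(1)] and y = chi_eigenpair_cases[OF this(2)]
      and z = chi_eigenpair_cases[OF this(3)]
    have "0 \<le> a" "0 \<le> b" using x y k by auto
    then have "c = 1 / k" "P z = 0" using z abc by auto
    then have "x \<in> K" "y \<in> K" using x y abc \<open>0 \<le> a\<close> \<open>0 \<le> b\<close> by auto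
    then show "inner (br x y) z = 0" using orthogonal_K[OF \<open>P z = 0\<close>] bracket_closed by blast
  qed
  ultimately show ?thesis using symmetric_chi trace_chi by (simp add: Fplus_def)
qed

lemma chi_commutes_ad:
  assumes X: "X \<in> K"
  shows "chi (br X y) = br X (chi y)"
proof -
  have "P (br X y) = br X (P y)"
  proof (rule P_unique)
    show "br X (P y) \<in> K" using bracket_closed[OF X P_in] .
    show "\<forall>z\<in>K. inner (br X y - br X (P y)) z = 0"
    proof
      fix z assume z: "z \<in> K"
      have "inner (br X y - br X (P y)) z = inner (br X (y - P y)) z"
        by (simp add: linear_diff[OF linear_br])
      also have "\<dots> = - inner (y - P y) (br X z)"
        by (subst br_antisym) (simp add: br_inner_invariant)
      also have "\<dots> = 0" using P_orthogonal bracket_closed[OF X z] by simp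
      finally show "inner (br X y - br X (P y)) z = 0" .
    qed
  qed
  then show ?thesis by (simp add: chi_eq linear_diff[OF linear_br] linear_scale[OF linear_br])
qed

lemma chi_commutes_isometry:
  assumes f: "linear f" "\<And>x y. inner (f x) (f y) = inner x y" "f ` K = K"
  shows "chi (f x) = f (chi x)"
proof -
  have "P (f x) = f (P x)"
  proof (rule P_unique)
    show "f (P x) \<in> K" using f(3) P_in by blast
    show "\<forall>z\<in>K. inner (f x - f (P x)) z = 0"
    proof
      fix z assume "z \<in> K"
      then obtain z' where "z' \<in> K" "z = f z'" using f(3) by blast
      then show "inner (f x - f (P x)) z = 0"
        using f(2) P_orthogonal[of z' x] by (simp add: linear_diff[OF f(1), symmetric])
    qed
  qed
  then show ?thesis by (simp add: chi_eq linear_diff[OF f(1)] linear_scale[OF f(1)])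
qed

definition K_adapted :: "('a \<Rightarrow> 'a) \<Rightarrow> bool" where
  "K_adapted A \<longleftrightarrow> symmetric_op A \<and> (\<forall>x\<in>K. A x = 0) \<and> (\<forall>X\<in>K. \<forall>y. A (br X y) = br X (A y))"

lemma Dset_imp_K_adapted: "A \<in> Dset br Aut K \<Longrightarrow> K_adapted A"
  by (simp add: Dset_def K_adapted_def)

definition ray :: "('a \<Rightarrow> 'a) \<Rightarrow> real \<Rightarrow> 'a \<Rightarrow> 'a" where
  "ray A t = (\<lambda>x. t *\<^sub>R (A x - chi x) + chi x)"

lemma ray_0: "ray A 0 = chi" and ray_1: "ray A 1 = A"
  by (simp_all add: ray_def)

text \<open>A common eigenvector of all \<open>ray A t\<close>, with eigenvalue \<open>v0 + t * v1\<close>; by the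
  lemma \<open>ray_eigenpair_decomp\<close> below these span every eigenspace of \<open>ray A t\<close> for \<open>t \<noteq> 0\<close>.\<close>
definition split_eigenpair :: "('a \<Rightarrow> 'a) \<Rightarrow> 'a \<Rightarrow> real \<Rightarrow> real \<Rightarrow> bool" where
  "split_eigenpair A x v0 v1 \<longleftrightarrow> x \<noteq> 0 \<and>
     ((x \<in> K \<and> v0 = 0 \<and> v1 = 0) \<or> (P x = 0 \<and> v0 = 1 / k \<and> A x = (v0 + v1) *\<^sub>R x))"

definition ray_nonneg :: "('a \<Rightarrow> 'a) \<Rightarrow> real \<Rightarrow> bool" where
  "ray_nonneg A t \<longleftrightarrow> (\<forall>x v0 v1. split_eigenpair A x v0 v1 \<longrightarrow> 0 \<le> v0 + t * v1)"

definition ray_filtering :: "('a \<Rightarrow> 'a) \<Rightarrow> real \<Rightarrow> bool" where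
  "ray_filtering A t \<longleftrightarrow> (\<forall>x y z x0 x1 y0 y1 z0 z1.
     split_eigenpair A x x0 x1 \<and> split_eigenpair A y y0 y1 \<and> split_eigenpair A z z0 z1
     \<and> 0 < (z0 - x0 - y0) + t * (z1 - x1 - y1) \<longrightarrow> inner (br x y) z = 0)"

definition split_component :: "('a \<Rightarrow> 'a) \<Rightarrow> real \<Rightarrow> 'a \<Rightarrow> real \<Rightarrow> bool" where
  "split_component A t x a \<longleftrightarrow> x = 0 \<or> (\<exists>v0 v1. split_eigenpair A x v0 v1 \<and> a = v0 + t * v1)"

lemma split_eigenpair_cases:
  "split_eigenpair A x v0 v1 \<Longrightarrow> (x \<in> K \<and> v0 = 0 \<and> v1 = 0) \<or> (P x = 0 \<and> v0 = 1 / k)"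
  by (auto simp: split_eigenpair_def)

lemma split_eigenpair_nonzero: "split_eigenpair A x v0 v1 \<Longrightarrow> x \<noteq> 0"
  by (simp add: split_eigenpair_def)

lemma split_eigenpair_bracket_orthogonal:
  assumes "split_eigenpair A x x0 x1" "split_eigenpair A y y0 y1" "split_eigenpair A z z0 z1"
    and "x0 + y0 < z0"
  shows "inner (br x y) z = 0"
proof -
  note x = split_eigenpair_cases[OF assms(1)] and y = split_eigenpair_cases[OF assms(2)]
    and z = split_eigenpair_cases[OF assms(3)]
  have "0 < 1 / k" using codim_pos by simp
  then have "0 \<le> x0" "0 \<le> y0" using x y by auto
  then have "z0 = 1 / k" "P z = 0" using z assms(4) by auto
  then have "x \<in> K" "y \<in> K" using x y assms(4) \<open>0 \<le> x0\<close> \<open>0 \<le> y0\<close> by auto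
  then show ?thesis using orthogonal_K[OF \<open>P z = 0\<close>] bracket_closed by blast
qed

lemma ray_nonnegD: "ray_nonneg A t \<Longrightarrow> split_eigenpair A x v0 v1 \<Longrightarrow> 0 \<le> v0 + t * v1"
  unfolding ray_nonneg_def by blast

lemma ray_filteringD:
  assumes "ray_filtering A t"
    "split_eigenpair A x x0 x1" "split_eigenpair A y y0 y1" "split_eigenpair A z z0 z1"
    "0 < (z0 - x0 - y0) + t * (z1 - x1 - y1)"
  shows "inner (br x y) z = 0"
  using assms unfolding ray_filtering_def by blast

lemma ray_filtering_components_orthogonal:
  assumes "ray_filtering A t" "split_component A t u a" "split_component A t v b"
    "split_component A t w c" "a + b < c"
  shows "inner (br u v) w = 0"
proof (cases "u = 0 \<or> v = 0 \<or> w = 0")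
  case True
  then show ?thesis by (auto simp: bilinear_lzero[OF bilinear_br] bilinear_rzero[OF bilinear_br])
next
  case False
  then obtain u0 u1 v0 v1 w0 w1 where split: "split_eigenpair A u u0 u1"
    "split_eigenpair A v v0 v1" "split_eigenpair A w w0 w1"
    and "a = u0 + t * u1" "b = v0 + t * v1" "c = w0 + t * w1"
    using assms(2-4) unfolding split_component_def by blast
  then have "0 < (w0 - u0 - v0) + t * (w1 - u1 - v1)" using assms(5) by (simp add: algebra_simps)
  then show ?thesis by (rule ray_filteringD[OF assms(1) split])
qed

lemma ray_nonneg_downward:
  assumes "ray_nonneg A t" "0 \<le> s" "s \<le> t"
  shows "ray_nonneg A s"
  unfolding ray_nonneg_def
proof (intro allI impI)
  fix x v0 v1 assume x: "split_eigenpair A x v0 v1"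
  have "0 \<le> v0" using split_eigenpair_cases[OF x] codim_pos by auto
  moreover have "0 \<le> v0 + t * v1" using ray_nonnegD[OF assms(1) x] .
  ultimately show "0 \<le> v0 + s * v1" using affine_nonneg_between assms(2,3) by blast
qed

lemma ray_filtering_downward:
  assumes "ray_filtering A t" "0 < s" "s \<le> t"
  shows "ray_filtering A s"
  unfolding ray_filtering_def
proof (intro allI impI, elim conjE)
  fix x y z x0 x1 y0 y1 z0 z1
  assume split: "split_eigenpair A x x0 x1" "split_eigenpair A y y0 y1" "split_eigenpair A z z0 z1"
    and s_pos: "0 < (z0 - x0 - y0) + s * (z1 - x1 - y1)"
  show "inner (br x y) z = 0"
  proof (cases "x0 + y0 < z0")
    case True
    then show ?thesis using split_eigenpair_bracket_orthogonal[OF split] by blast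
  next
    case False
    then have "0 < (z0 - x0 - y0) + t * (z1 - x1 - y1)"
      using affine_pos_mono[OF _ s_pos assms(2,3)] by simp
    then show ?thesis using ray_filteringD[OF assms(1) split] by blast
  qed
qed

lemma ray_nonneg_left_closed:
  assumes "0 < t" "\<And>s. 0 < s \<Longrightarrow> s < t \<Longrightarrow> ray_nonneg A s"
  shows "ray_nonneg A t"
  unfolding ray_nonneg_def
proof (intro allI impI)
  fix x v0 v1 assume x: "split_eigenpair A x v0 v1"
  show "0 \<le> v0 + t * v1"
  proof (rule ccontr)
    assume "\<not> 0 \<le> v0 + t * v1"
    then have "0 < - v0 + t * - v1" by linarith
    then obtain s where "0 < s" "s < t" "0 < - v0 + s * - v1"
      by (rule affine_pos_near_left[OF _ assms(1)])
    moreover have "0 \<le> v0 + s * v1" using ray_nonnegD[OF assms(2)[OF \<open>0 < s\<close> \<open>s < t\<close>] x] .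
    ultimately show False by linarith
  qed
qed

lemma ray_filtering_left_closed:
  assumes "0 < t" "\<And>s. 0 < s \<Longrightarrow> s < t \<Longrightarrow> ray_filtering A s"
  shows "ray_filtering A t"
  unfolding ray_filtering_def
proof (intro allI impI, elim conjE)
  fix x y z x0 x1 y0 y1 z0 z1
  assume split: "split_eigenpair A x x0 x1" "split_eigenpair A y y0 y1" "split_eigenpair A z z0 z1"
    and pos: "0 < (z0 - x0 - y0) + t * (z1 - x1 - y1)"
  obtain s where "0 < s" "s < t" "0 < (z0 - x0 - y0) + s * (z1 - x1 - y1)"
    by (rule affine_pos_near_left[OF pos assms(1)])
  then show "inner (br x y) z = 0"
    using ray_filteringD[OF assms(2) split] by simp
qed

context
  fixes A assumes A: "K_adapted A"
begin

lemma symmetric_A: "symmetric_op A" and A_K: "x \<in> K \<Longrightarrow> A x = 0"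
  and A_commutes_ad: "X \<in> K \<Longrightarrow> A (br X y) = br X (A y)"
  using A by (auto simp: K_adapted_def)

lemma P_A: "P (A x) = 0"
  unfolding P_eq_0_iff using symmetric_opD(2)[OF symmetric_A] A_K by simp

lemma A_diff_P: "A (x - P x) = A x"
  by (simp add: linear_diff[OF symmetric_opD(1)[OF symmetric_A]] A_K P_in)

lemma symmetric_ray: "symmetric_op (ray A t)"
proof -
  note lin = symmetric_opD(1)[OF symmetric_A] symmetric_opD(1)[OF symmetric_chi]
  have "linear (ray A t)" unfolding ray_def
    by (rule linearI) (auto simp: linear_add[OF lin(1)] linear_scale[OF lin(1)]
        linear_add[OF lin(2)] linear_scale[OF lin(2)] algebra_simps)
  then show ?thesis
    using symmetric_opD(2)[OF symmetric_A] symmetric_opD(2)[OF symmetric_chi]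
    by (simp add: symmetric_op_def ray_def inner_diff_left inner_diff_right inner_add_left
        inner_add_right)
qed

lemma trace_ray: "trace_op A = 1 \<Longrightarrow> trace_op (ray A t) = 1"
  using trace_chi
  by (simp add: trace_op_def ray_def inner_add_left inner_diff_left sum.distrib sum_subtractf
      sum_distrib_left[symmetric])

lemma split_eigenpair_ray:
  assumes "split_eigenpair A x v0 v1"
  shows "eigenpair (ray A t) x (v0 + t * v1)"
  using assms unfolding split_eigenpair_def eigenpair_def ray_def
proof (elim conjE disjE)
  assume "P x = 0" "v0 = 1 / k" "A x = (v0 + v1) *\<^sub>R x"
  then have "t *\<^sub>R (A x - chi x) + chi x = (t * v1 + v0) *\<^sub>R x"
    by (simp add: chi_orthogonal_K algebra_simps)
  then show "x \<noteq> 0 \<Longrightarrow> x \<noteq> 0 \<and> t *\<^sub>R (A x - chi x) + chi x = (v0 + t * v1) *\<^sub>R x"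
    by (simp add: add.commute)
qed (simp_all add: A_K chi_K)

lemma ray_eigenpair_decomp:
  assumes t: "t \<noteq> 0" and a: "eigenpair (ray A t) x a"
  obtains x1 x2 where "x = x1 + x2" "split_component A t x1 a" "split_component A t x2 a"
proof -
  define x2 where "x2 = x - P x"
  have P_x2: "P x2 = 0" by (simp add: x2_def P_diff_self)
  have ray_x: "ray A t x = t *\<^sub>R A x2 + ((1 - t) / k) *\<^sub>R x2"
    by (simp add: ray_def x2_def A_diff_P chi_eq algebra_simps diff_divide_distrib scaleR_diff_left)
  have ray_xa: "ray A t x = a *\<^sub>R x" using a by (simp add: eigenpair_def)
  have "P (ray A t x) = 0"
    unfolding ray_x by (simp add: linear_add[OF linear_P] P_scale P_A P_x2)
  then have "a *\<^sub>R P x = 0" by (simp add: ray_xa P_scale)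
  then have "a *\<^sub>R x2 = a *\<^sub>R x" by (simp add: x2_def scaleR_diff_right)
  then have "t *\<^sub>R A x2 + ((1 - t) / k) *\<^sub>R x2 = a *\<^sub>R x2" using ray_x ray_xa by metis
  then have "t *\<^sub>R A x2 = (a - (1 - t) / k) *\<^sub>R x2" by (simp add: algebra_simps scaleR_diff_left)
  then have "(1 / t) *\<^sub>R (t *\<^sub>R A x2) = (1 / t) *\<^sub>R ((a - (1 - t) / k) *\<^sub>R x2)" by simp
  moreover have "(a - (1 - t) / k) / t = 1 / k + (a - 1 / k) / t"
    using t codim_pos by (simp add: field_simps)
  ultimately have "A x2 = (1 / k + (a - 1 / k) / t) *\<^sub>R x2" using t by simp
  moreover have "a = 1 / k + t * ((a - 1 / k) / t)" using t by simp
  ultimately have x2: "split_component A t x2 a"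
    using P_x2 unfolding split_component_def split_eigenpair_def by blast
  have "split_component A t (P x) a"
  proof (cases "P x = 0")
    case False
    then have "a = 0" using \<open>a *\<^sub>R P x = 0\<close> by simp
    then show ?thesis using False P_in[of x] unfolding split_component_def split_eigenpair_def
      by (intro disjI2 exI[of _ 0]) simp
  qed (simp add: split_component_def)
  with x2 show thesis by (intro that[of "P x" x2]) (simp_all add: x2_def)
qed

lemma symmetric_diff_chi: "symmetric_op (\<lambda>x. A x - chi x)"
proof -
  have "linear (\<lambda>x. A x - chi x)"
    by (intro linear_compose_sub symmetric_opD(1) symmetric_A symmetric_chi)
  then show ?thesis
    using symmetric_opD(2)[OF symmetric_A] symmetric_opD(2)[OF symmetric_chi]
    by (simp add: symmetric_op_def inner_diff_left inner_diff_right)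
qed

lemma split_eigenpair_eigenvector: "split_eigenpair A x v0 v1 \<Longrightarrow> A x = (v0 + v1) *\<^sub>R x"
  using split_eigenpair_ray[where t=1] by (simp add: ray_1 eigenpair_def)

lemma bracket_eigenvector_orthogonal:
  assumes "X \<in> K" "A y = b *\<^sub>R y" "A z = c *\<^sub>R z" "b \<noteq> c"
  shows "inner (br X y) z = 0"
proof -
  have "A (br X y) = b *\<^sub>R br X y"
    using assms(2) A_commutes_ad[OF assms(1)] by (simp add: linear_scale[OF linear_br])
  then show ?thesis using symmetric_eigenvectors_orthogonal[OF symmetric_A] assms(3,4) by blast
qed

lemma nonneg_spectrum_ray_iff:
  assumes t: "t \<noteq> 0"
  shows "nonneg_spectrum (ray A t) \<longleftrightarrow> ray_nonneg A t"
proof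
  assume "nonneg_spectrum (ray A t)"
  then show "ray_nonneg A t"
    using split_eigenpair_ray[where t=t] unfolding ray_nonneg_def nonneg_spectrum_iff by blast
next
  assume nonneg: "ray_nonneg A t"
  show "nonneg_spectrum (ray A t)" unfolding nonneg_spectrum_iff
  proof (intro allI impI)
    fix x a assume "eigenpair (ray A t) x a"
    then obtain x1 x2 where "x = x1 + x2" "split_component A t x1 a" "split_component A t x2 a"
      by (rule ray_eigenpair_decomp[OF t])
    moreover have "x \<noteq> 0" using \<open>eigenpair (ray A t) x a\<close> by (simp add: eigenpair_def)
    ultimately show "0 \<le> a" using ray_nonnegD[OF nonneg] by (auto simp: split_component_def)
  qed
qed

lemma filtering_ray_iff:
  assumes t: "t \<noteq> 0"
  shows "filtering br (ray A t) \<longleftrightarrow> ray_filtering A t"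
  unfolding filtering_iff_eigenpairs[OF symmetric_ray bilinear_br]
proof
  assume H: "\<forall>x y z a b c. eigenpair (ray A t) x a \<and> eigenpair (ray A t) y b
    \<and> eigenpair (ray A t) z c \<and> a + b < c \<longrightarrow> inner (br x y) z = 0"
  show "ray_filtering A t" unfolding ray_filtering_def
  proof (intro allI impI, elim conjE)
    fix x y z x0 x1 y0 y1 z0 z1
    assume "split_eigenpair A x x0 x1" "split_eigenpair A y y0 y1" "split_eigenpair A z z0 z1"
      and "0 < (z0 - x0 - y0) + t * (z1 - x1 - y1)"
    moreover have "(x0 + t * x1) + (y0 + t * y1) < z0 + t * z1 \<longleftrightarrow>
      0 < (z0 - x0 - y0) + t * (z1 - x1 - y1)" by (simp add: algebra_simps)
    ultimately show "inner (br x y) z = 0" using H split_eigenpair_ray[where t=t] by blast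
  qed
next
  assume H: "ray_filtering A t"
  show "\<forall>x y z a b c. eigenpair (ray A t) x a \<and> eigenpair (ray A t) y b
    \<and> eigenpair (ray A t) z c \<and> a + b < c \<longrightarrow> inner (br x y) z = 0"
  proof (intro allI impI, elim conjE)
    fix x y z a b c
    assume "eigenpair (ray A t) x a" "eigenpair (ray A t) y b" "eigenpair (ray A t) z c"
      and abc: "a + b < c"
    obtain x1 x2 where x: "x = x1 + x2" "split_component A t x1 a" "split_component A t x2 a"
      by (rule ray_eigenpair_decomp[OF t \<open>eigenpair (ray A t) x a\<close>])
    obtain y1 y2 where y: "y = y1 + y2" "split_component A t y1 b" "split_component A t y2 b"
      by (rule ray_eigenpair_decomp[OF t \<open>eigenpair (ray A t) y b\<close>])
    obtain z1 z2 where z: "z = z1 + z2" "split_component A t z1 c" "split_component A t z2 c"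
      by (rule ray_eigenpair_decomp[OF t \<open>eigenpair (ray A t) z c\<close>])
    note orth = ray_filtering_components_orthogonal[OF H]
    show "inner (br x y) z = 0" unfolding x(1) y(1) z(1)
      using orth[OF x(2) y(2) z(2) abc] orth[OF x(2) y(2) z(3) abc]
        orth[OF x(2) y(3) z(2) abc] orth[OF x(2) y(3) z(3) abc]
        orth[OF x(3) y(2) z(2) abc] orth[OF x(3) y(2) z(3) abc]
        orth[OF x(3) y(3) z(2) abc] orth[OF x(3) y(3) z(3) abc]
      by (simp add: bilinear_ladd[OF bilinear_br] bilinear_radd[OF bilinear_br]
          inner_add_left inner_add_right)
  qed
qed

end

definition test_op :: "'a \<Rightarrow> 'a \<Rightarrow> 'a \<Rightarrow> 'a" where
  "test_op v w = (\<lambda>x. inner x v *\<^sub>R v - 2 *\<^sub>R (inner x w *\<^sub>R w) + chi x)"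

lemma symmetric_test_op: "symmetric_op (test_op v w)"
proof -
  have "linear (test_op v w)" unfolding test_op_def
    using symmetric_opD(1)[OF symmetric_chi]
    by (intro linearI) (simp_all add: inner_add_left linear_add linear_scale algebra_simps)
  then show ?thesis
    using symmetric_opD(2)[OF symmetric_chi]
    by (simp add: symmetric_op_def test_op_def inner_add_left inner_diff_left inner_add_right
        inner_diff_right inner_commute)
qed

lemma op_norm_tr_test_op:
  assumes v: "norm v = 1" "P v = 0" and w: "norm w = 1" "P w = 0" and vw: "inner v w = 0"
  shows "op_norm_tr (test_op v w) = sqrt (5 - 1 / k)"
proof -
  note chi_sym = symmetric_opD(2)[OF symmetric_chi]
  have vv: "inner v v = 1" "inner w w = 1" using v(1) w(1) by (simp_all add: norm_eq_1)
  have norm_S: "(norm (test_op v w b))\<^sup>2 = (1 + 2 / k) * (inner b v * inner b v)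
      + (4 - 4 / k) * (inner b w * inner b w) + (1 / k) * inner (chi b) b" for b
  proof -
    have chi_b: "inner v (chi b) = (1 / k) * inner b v" "inner w (chi b) = (1 / k) * inner b w"
      "inner (chi b) (chi b) = (1 / k) * inner (chi b) b"
      using chi_sym[of v b] chi_sym[of w b] chi_sym[of b "chi b"] v(2) w(2)
        chi_orthogonal_K[OF P_chi, of b]
      by (simp_all add: chi_orthogonal_K inner_commute)
    have "inner (test_op v w b) (test_op v w b) = inner b v * inner b v * inner v v
        + 4 * (inner b w * inner b w) * inner w w + inner (chi b) (chi b)
        - 4 * inner b v * inner b w * inner v w
        + 2 * inner b v * inner v (chi b) - 4 * inner b w * inner w (chi b)"
      by (simp add: test_op_def inner_add_left inner_add_right inner_diff_left inner_diff_right
          inner_commute[of w v] inner_commute[of "chi b" v] inner_commute[of "chi b" w]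
          algebra_simps)
    then show ?thesis by (simp add: power2_norm_eq_inner chi_b vv vw algebra_simps)
  qed
  have "(\<Sum>b\<in>Basis. (norm (test_op v w b))\<^sup>2) = (1 + 2 / k) + (4 - 4 / k) + 1 / k"
    by (simp add: norm_S sum.distrib sum_distrib_left[symmetric] sum_divide_distrib[symmetric]
        sum_Basis_inner_square vv trace_chi[unfolded trace_op_def])
  also have "\<dots> = 5 - 1 / k" by (simp add: field_simps)
  finally show ?thesis by (simp add: op_norm_tr_eq[OF symmetric_test_op])
qed

context
  fixes A assumes A: "K_adapted A" and trace_A: "trace_op A = 1"
begin

lemma trace_diff_chi: "trace_op (\<lambda>x. A x - chi x) = 0"
  using trace_A trace_chi by (simp add: trace_op_def inner_diff_left sum_subtractf)

lemma ray_in_Fplus_iff: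
  assumes "t \<noteq> 0"
  shows "ray A t \<in> Fplus br \<longleftrightarrow> ray_nonneg A t \<and> ray_filtering A t"
  using symmetric_ray[OF A] trace_ray[OF A trace_A] nonneg_spectrum_ray_iff[OF A assms]
    filtering_ray_iff[OF A assms]
  by (auto simp: Fplus_def)

lemma ray_in_Fplus_downward:
  assumes "ray A t \<in> Fplus br" "0 \<le> s" "s \<le> t"
  shows "ray A s \<in> Fplus br"
proof (cases "s = 0")
  case True
  then show ?thesis using chi_in_Fplus by (simp add: ray_0)
next
  case False
  then have "0 < s" "t \<noteq> 0" using assms(2,3) by auto
  have "ray_nonneg A t" "ray_filtering A t"
    using assms(1) ray_in_Fplus_iff[OF \<open>t \<noteq> 0\<close>] by simp_all
  then have "ray_nonneg A s" "ray_filtering A s"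
    using ray_nonneg_downward assms(2,3) ray_filtering_downward \<open>0 < s\<close> by blast+
  then show ?thesis using ray_in_Fplus_iff[OF False] by simp
qed

lemma ray_in_Fplus_left_closed:
  assumes "0 < t" "\<And>s. 0 < s \<Longrightarrow> s < t \<Longrightarrow> ray A s \<in> Fplus br"
  shows "ray A t \<in> Fplus br"
proof -
  have "ray_nonneg A s \<and> ray_filtering A s" if "0 < s" "s < t" for s
    using assms(2)[OF that] ray_in_Fplus_iff[of s] that(1) by simp
  then have "ray_nonneg A t" "ray_filtering A t"
    using ray_nonneg_left_closed[OF assms(1)] ray_filtering_left_closed[OF assms(1)] by blast+
  then show ?thesis using ray_in_Fplus_iff[of t] assms(1) by simp
qed

lemma ray_eventually_not_in_Fplus:
  assumes "A \<noteq> chi"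
  obtains T where "\<And>t. T < t \<Longrightarrow> ray A t \<notin> Fplus br"
proof -
  define B where "B = (\<lambda>x. A x - chi x)"
  have B: "symmetric_op B" and "trace_op B = 0"
    unfolding B_def by (rule symmetric_diff_chi[OF A], rule trace_diff_chi)
  moreover have "B \<noteq> (\<lambda>x. 0)" using assms by (auto simp: B_def fun_eq_iff)
  ultimately obtain u M where "0 < M" and u: "eigenpair B u (- M)"
    using symmetric_trace_0_negative_eigenpair[OF B] by blast
  have "P (B u) = 0"
    by (simp add: B_def linear_diff[OF linear_P] P_A[OF A] P_chi)
  moreover have Bu: "B u = (- M) *\<^sub>R u" using u by (simp add: eigenpair_def)
  ultimately have "(- M) *\<^sub>R P u = 0" by (simp only: P_scale)
  then have "P u = 0" using \<open>0 < M\<close> by simp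
  have ray_u: "ray A t u = (1 / k - t * M) *\<^sub>R u" for t
  proof -
    have "ray A t u = t *\<^sub>R B u + chi u" by (simp add: ray_def B_def)
    also have "\<dots> = (1 / k - t * M) *\<^sub>R u"
      using Bu chi_orthogonal_K[OF \<open>P u = 0\<close>] by (simp add: scaleR_diff_left)
    finally show ?thesis .
  qed
  have "ray A t \<notin> Fplus br" if "1 / (k * M) < t" for t
  proof -
    have "1 / k - t * M < 0"
      using that \<open>0 < M\<close> codim_pos by (simp add: field_simps)
    then have "\<not> nonneg_spectrum (ray A t)"
      using u ray_u by (auto simp: nonneg_spectrum_iff eigenpair_def)
    then show ?thesis by (simp add: Fplus_def)
  qed
  then show thesis by (rule that)
qed

text \<open>Since the set of admissible parameters is an interval containing \<open>0\<close> and \<open>1\<close>,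
  bounded and closed, its supremum is the threshold.\<close>
lemma ray_Fplus_threshold:
  assumes "A \<in> Fplus br" "A \<noteq> chi"
  shows "\<exists>tA \<ge> 1. \<forall>t \<ge> 0. (t \<le> tA \<longrightarrow> ray A t \<in> Fplus br) \<and> (tA < t \<longrightarrow> ray A t \<notin> Fplus br)"
proof -
  obtain T where T: "\<And>t. T < t \<Longrightarrow> ray A t \<notin> Fplus br"
    using ray_eventually_not_in_Fplus[OF assms(2)] by blast
  define S where "S = {t. 0 \<le> t \<and> ray A t \<in> Fplus br}"
  have "1 \<in> S" using assms(1) by (simp add: S_def ray_1)
  have bdd: "bdd_above S"
    by (rule bdd_aboveI[of _ T]) (use T in \<open>force simp: S_def\<close>)
  define tA where "tA = Sup S"
  have "1 \<le> tA" unfolding tA_def by (rule cSup_upper[OF \<open>1 \<in> S\<close> bdd])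
  have below: "ray A s \<in> Fplus br" if "0 < s" "s < tA" for s
  proof -
    obtain r where "r \<in> S" "s < r"
      using \<open>s < tA\<close> less_cSup_iff[OF _ bdd] \<open>1 \<in> S\<close> unfolding tA_def by blast
    then show ?thesis using ray_in_Fplus_downward[of r s] that(1) by (simp add: S_def)
  qed
  have "ray A tA \<in> Fplus br"
    using ray_in_Fplus_left_closed[OF _ below] \<open>1 \<le> tA\<close> by simp
  then have "ray A t \<in> Fplus br" if "0 \<le> t" "t \<le> tA" for t
    using ray_in_Fplus_downward that by blast
  moreover have "ray A t \<notin> Fplus br" if "0 \<le> t" "tA < t" for t
    using that cSup_upper[OF _ bdd, of t] by (auto simp: S_def tA_def)
  ultimately show ?thesis using \<open>1 \<le> tA\<close> by blast
qed

lemma sum_inner_test_op: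
  assumes v: "norm v = 1" "P v = 0" "A v = nu *\<^sub>R v" and w: "norm w = 1" "P w = 0" "A w = mu *\<^sub>R w"
  shows "(\<Sum>b\<in>Basis. inner (test_op v w b) (A b - chi b)) = (nu - 1 / k) - 2 * (mu - 1 / k)"
proof -
  define B where "B = (\<lambda>x. A x - chi x)"
  have B: "symmetric_op B" and P_B: "P (B x) = 0" for x
    using symmetric_diff_chi[OF A] by (simp_all add: B_def linear_diff[OF linear_P] P_A[OF A] P_chi)
  have Bvw: "inner v (B b) = (nu - 1 / k) * inner b v" "inner w (B b) = (mu - 1 / k) * inner b w"
    for b
    using symmetric_opD(2)[OF B, of v b] symmetric_opD(2)[OF B, of w b] v(2,3) w(2,3)
    by (simp_all add: B_def chi_orthogonal_K inner_diff_left inner_commute algebra_simps)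
  have chi_B: "inner (chi b) (B b) = (1 / k) * inner (B b) b" for b
    using symmetric_opD(2)[OF symmetric_chi, of b "B b"] chi_orthogonal_K[OF P_B]
    by (simp add: inner_commute)
  have "inner (test_op v w b) (B b) = (nu - 1 / k) * (inner b v * inner b v)
      - 2 * (mu - 1 / k) * (inner b w * inner b w) + (1 / k) * inner (B b) b" for b
    by (simp add: test_op_def inner_add_left inner_diff_left Bvw chi_B algebra_simps)
  then show ?thesis using trace_diff_chi v(1) w(1)
    by (simp add: B_def sum.distrib sum_subtractf sum_distrib_left[symmetric] norm_eq_1
        sum_divide_distrib[symmetric] sum_Basis_inner_square trace_op_def)
qed

lemma eigenvalue_gap_le_op_norm_tr:
  assumes v: "norm v = 1" "P v = 0" "A v = nu *\<^sub>R v"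
    and w: "norm w = 1" "P w = 0" "A w = mu *\<^sub>R w" and vw: "inner v w = 0"
  shows "(nu - 1 / k) - 2 * (mu - 1 / k) \<le> sqrt (5 - 1 / k) * op_norm_tr (\<lambda>x. A x - chi x)"
  using sum_inner_le_op_norm_tr[OF symmetric_test_op[of v w] symmetric_diff_chi[OF A]]
  by (simp add: sum_inner_test_op[OF v w] op_norm_tr_test_op[OF v(1,2) w(1,2) vw] mult.commute)

end

definition radius :: real where
  "radius = 1 / (k * sqrt (5 - 1 / k))"

lemma codim_ge_1: "1 \<le> k"
proof -
  have "0 < codim K" using codim_pos by simp
  then show ?thesis by simp
qed

lemma five_minus_inverse_codim_pos: "0 < 5 - 1 / k"
  using codim_ge_1 by (simp add: field_simps)

lemma radius_pos: "0 < radius"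
  using five_minus_inverse_codim_pos codim_pos by (simp add: radius_def)

lemma sqrt_mult_radius: "sqrt (5 - 1 / k) * radius = 1 / k"
  using five_minus_inverse_codim_pos by (simp add: radius_def)

context
  fixes A assumes A: "K_adapted A" and trace_A: "trace_op A = 1"
    and near: "op_norm_tr (\<lambda>x. A x - chi x) \<le> radius"
begin

lemma eigenvalue_le_twice:
  assumes v: "v \<noteq> 0" "P v = 0" "A v = nu *\<^sub>R v"
    and w: "w \<noteq> 0" "P w = 0" "A w = mu *\<^sub>R w" and "nu \<noteq> mu"
  shows "nu \<le> 2 * mu"
proof -
  note lin = symmetric_opD(1)[OF symmetric_A[OF A]]
  have "inner (v /\<^sub>R norm v) (w /\<^sub>R norm w) = 0"
    using symmetric_eigenvectors_orthogonal[OF symmetric_A[OF A] v(3) w(3) \<open>nu \<noteq> mu\<close>] by simp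
  then have "(nu - 1 / k) - 2 * (mu - 1 / k) \<le> sqrt (5 - 1 / k) * op_norm_tr (\<lambda>x. A x - chi x)"
    using v w
    by (intro eigenvalue_gap_le_op_norm_tr[OF A trace_A, where v = "v /\<^sub>R norm v"
          and w = "w /\<^sub>R norm w"]) (simp_all add: P_scale linear_scale[OF lin])
  also have "\<dots> \<le> sqrt (5 - 1 / k) * radius"
    using five_minus_inverse_codim_pos by (intro mult_left_mono[OF near]) simp
  finally show ?thesis by (simp add: sqrt_mult_radius)
qed

text \<open>Filtering is checked on eigenvectors of \<open>A\<close> in \<open>K\<close> or \<open>K\<^sup>\<perp>\<close>: a bracket with an
  element of \<open>K\<close> keeps the eigenvalue, and two eigenvectors in \<open>K\<^sup>\<perp>\<close> are excluded by
  \<open>eigenvalue_le_twice\<close>.\<close>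
lemma near_chi_ray_filtering:
  assumes nonneg: "ray_nonneg A 1"
  shows "ray_filtering A 1"
  unfolding ray_filtering_def
proof (intro allI impI, elim conjE)
  fix x y z x0 x1 y0 y1 z0 z1
  assume sx: "split_eigenpair A x x0 x1" and sy: "split_eigenpair A y y0 y1"
    and sz: "split_eigenpair A z z0 z1" and gap: "0 < (z0 - x0 - y0) + 1 * (z1 - x1 - y1)"
  define a where "a = x0 + x1"
  define b where "b = y0 + y1"
  define c where "c = z0 + z1"
  have Ax: "A x = a *\<^sub>R x" and Ay: "A y = b *\<^sub>R y" and Az: "A z = c *\<^sub>R z"
    using split_eigenpair_eigenvector[OF A] sx sy sz by (simp_all add: a_def b_def c_def)
  have "0 \<le> a" "0 \<le> b"
    using ray_nonnegD[OF nonneg sx] ray_nonnegD[OF nonneg sy] by (simp_all add: a_def b_def c_def)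
  moreover have "a + b < c" using gap by (simp add: a_def b_def c_def)
  ultimately have "a \<noteq> c" "b \<noteq> c" "0 < c" by linarith+
  then have "P z = 0" using split_eigenpair_cases[OF sz] by (auto simp: a_def b_def c_def)
  show "inner (br x y) z = 0"
  proof (cases "x \<in> K")
    case True
    show ?thesis by (rule bracket_eigenvector_orthogonal[OF A True Ay Az \<open>b \<noteq> c\<close>])
  next
    case x: False
    show ?thesis
    proof (cases "y \<in> K")
      case True
      have "inner (br y x) z = 0"
        by (rule bracket_eigenvector_orthogonal[OF A True Ax Az \<open>a \<noteq> c\<close>])
      then show ?thesis by (simp add: br_antisym[of x y])
    next
      case False
      then have "P x = 0" "P y = 0"
        using x split_eigenpair_cases[OF sx] split_eigenpair_cases[OF sy] by auto
      have "c \<le> 2 * a" "c \<le> 2 * b"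
        using eigenvalue_le_twice[OF split_eigenpair_nonzero[OF sz] \<open>P z = 0\<close> Az]
          split_eigenpair_nonzero[OF sx] split_eigenpair_nonzero[OF sy]
          \<open>P x = 0\<close> \<open>P y = 0\<close> Ax Ay \<open>a \<noteq> c\<close> \<open>b \<noteq> c\<close> by auto
      then show ?thesis using \<open>a + b < c\<close> by linarith
    qed
  qed
qed

lemma near_chi_in_Fplus:
  assumes "nonneg_spectrum A"
  shows "A \<in> Fplus br"
proof -
  have "ray_nonneg A 1"
    using assms nonneg_spectrum_ray_iff[OF A, of 1] by (simp add: ray_1)
  then show ?thesis
    using near_chi_ray_filtering ray_in_Fplus_iff[OF A trace_A, of 1] by (simp add: ray_1)
qed

end

context
  fixes Aut :: "('a \<Rightarrow> 'a) set"
  assumes Aut: "\<forall>f\<in>Aut. linear f \<and> (\<forall>x y. inner (f x) (f y) = inner x y) \<and> f ` K = K"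
begin

lemma chi_in_Dset: "chi \<in> Dset br Aut K"
  using chi_in_Fplus chi_commutes_isometry Aut chi_commutes_ad chi_K
  unfolding Dset_def Fplus_def by (auto simp: fun_eq_iff)

lemma ray_in_Dset:
  assumes "A \<in> Dset br Aut K" "ray A t \<in> Fplus br"
  shows "ray A t \<in> Dset br Aut K"
proof -
  note A = Dset_imp_K_adapted[OF assms(1)]
  have "ray A t \<circ> f = f \<circ> ray A t" if f: "f \<in> Aut" for f
  proof
    fix x
    have "linear f" using Aut f by blast
    moreover have "A (f x) = f (A x)" "chi (f x) = f (chi x)"
      using assms(1) chi_in_Dset f unfolding Dset_def by (auto simp: fun_eq_iff)
    ultimately show "(ray A t \<circ> f) x = (f \<circ> ray A t) x"
      by (simp add: ray_def linear_add linear_diff linear_scale)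
  qed
  moreover have "ray A t x = 0" if "x \<in> K" for x
    using that by (simp add: ray_def A_K[OF A] chi_K)
  moreover have "ray A t (br X y) = br X (ray A t y)" if "X \<in> K" for X y
    using that by (simp add: ray_def A_commutes_ad[OF A] chi_commutes_ad linear_add[OF linear_br]
        linear_diff[OF linear_br] linear_scale[OF linear_br])
  ultimately show ?thesis using assms(2) unfolding Dset_def Fplus_def by blast
qed

lemma star_shaped_Dset_Fplus: "star_shaped_wrt (Dset br Aut K \<inter> Fplus br) chi"
  unfolding star_shaped_wrt_def
proof (intro conjI ballI)
  show "chi \<in> Dset br Aut K \<inter> Fplus br" using chi_in_Dset chi_in_Fplus by blast
next
  fix A s assume A: "A \<in> Dset br Aut K \<inter> Fplus br" and s: "s \<in> {0..1::real}"
  have "K_adapted A" "trace_op A = 1" "ray A 1 \<in> Fplus br"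
    using A Dset_imp_K_adapted by (auto simp: Dset_def ray_1)
  then have "ray A s \<in> Fplus br" using ray_in_Fplus_downward s by auto
  then show "(\<lambda>x. s *\<^sub>R (A x - chi x) + chi x) \<in> Dset br Aut K \<inter> Fplus br"
    using ray_in_Dset A by (simp add: ray_def)
qed

end

end

theorem lemma4p4:
  fixes br :: "'a::euclidean_space \<Rightarrow> 'a \<Rightarrow> 'a"
    and H K :: "'a set" and Aut :: "('a \<Rightarrow> 'a) set"
  assumes g: "compact_lie_alg br"
    and h: "subalgebra br H" "H \<noteq> UNIV"
    and Aut: "compact_aut_group br H Aut"
    and k: "subalgebra br K" "H \<subseteq> K" "K \<noteq> UNIV" "\<forall>f\<in>Aut. f ` K = K"
    and D: "Dset br Aut K \<noteq> {chibar K}"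
  defines "R \<equiv> 1 / (real (codim K) * sqrt (5 - 1 / real (codim K)))"
    and "\<Omega> \<equiv> {A \<in> Dset br Aut K. op_norm_tr (\<lambda>x. A x - chibar K x)
                 = 1 / (real (codim K) * sqrt (5 - 1 / real (codim K)))}"
  shows "\<Omega> \<subseteq> Fplus br
    \<and> (\<forall>A\<in>\<Omega>. \<exists>tA \<ge> 1. \<forall>t \<ge> 0.
          (t \<le> tA \<longrightarrow> (\<lambda>x. t *\<^sub>R (A x - chibar K x) + chibar K x) \<in> Fplus br)
        \<and> (tA < t \<longrightarrow> (\<lambda>x. t *\<^sub>R (A x - chibar K x) + chibar K x) \<notin> Fplus br))
    \<and> star_shaped_wrt (Dset br Aut K \<inter> Fplus br) (chibar K)
    \<and> {A \<in> Dset br Aut K. op_norm_tr (\<lambda>x. A x - chibar K x) \<le> R} \<subseteq> Dset br Aut K \<inter> Fplus br"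
proof -
  interpret proper_subalgebra br K using g k(1,3) by unfold_locales
  have Aut_K: "\<forall>f\<in>Aut. linear f \<and> (\<forall>x y. inner (f x) (f y) = inner x y) \<and> f ` K = K"
    using Aut k(4) by (auto simp: compact_aut_group_def)
  have ball: "A \<in> Fplus br" if "A \<in> Dset br Aut K" "op_norm_tr (\<lambda>x. A x - chi x) \<le> radius" for A
    using near_chi_in_Fplus[OF Dset_imp_K_adapted[OF that(1)] _ that(2)] that(1)
    by (simp add: Dset_def)
  have threshold: "\<exists>tA \<ge> 1. \<forall>t \<ge> 0. (t \<le> tA \<longrightarrow> ray A t \<in> Fplus br) \<and> (tA < t \<longrightarrow> ray A t \<notin> Fplus br)"
    if "A \<in> \<Omega>" for A
  proof (rule ray_Fplus_threshold)
    show "K_adapted A" "trace_op A = 1" "A \<in> Fplus br"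
      using that ball by (auto simp: \<Omega>_def radius_def Dset_def Dset_imp_K_adapted)
    show "A \<noteq> chi"
      using that radius_pos by (auto simp: \<Omega>_def radius_def op_norm_tr_def trace_op_def)
  qed
  show ?thesis
    using ball threshold star_shaped_Dset_Fplus[OF Aut_K]
    by (auto simp: \<Omega>_def R_def radius_def ray_def)
qed

end
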